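(* The function $\nu(x)$ is positive for $x\in(1,1.732]$; consequently $\mu(x)$ is decreasing on $(1,1.732]$.
   Context: For $x\ge1$ let $\psi_1(x)=\frac32\int_0^{\pi/2}(1-x^{-2}\sin^2u)^{3/2}\,du$, $\psi_2(x)=\frac32(1-x^{-2})^2\int_0^{\pi/2}\frac{\sin^4v}{\sqrt{1-(1-x^{-2})\sin^2v}}\,dv$, $\phi_1=\frac{4}{3\pi}\psi_1$, $\phi_2=\frac{16}{3\pi}\psi_2$. Let $\mu(x)=\frac{\psi_2'\psi_2+\psi_1'\psi_1}{\psi_2'\psi_1-\psi_1'\psi_2}$ and $\nu=(\phi_2'\phi_1-\phi_1'\phi_2)'(\phi_2'\phi_2+16\phi_1'\phi_1)-(\phi_2'\phi_1-\phi_1'\phi_2)(\phi_2'\phi_2+16\phi_1'\phi_1)'$, so that $\big(\frac{1}{4\mu}\big)'=\nu/(\phi_2'\phi_2+16\phi_1'\phi_1)^2$. *)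

theory Defs
  imports "HOL-Analysis.Analysis"
begin

definition psi1 :: "real \<Rightarrow> real" where
  "psi1 x = 3/2 * integral {0..pi/2} (\<lambda>u. (1 - sin u ^ 2 / x ^ 2) powr (3/2))"

definition psi2 :: "real \<Rightarrow> real" where
  "psi2 x = 3/2 * (1 - 1 / x ^ 2) ^ 2 *
     integral {0..pi/2} (\<lambda>v. sin v ^ 4 / sqrt (1 - (1 - 1 / x ^ 2) * sin v ^ 2))"

definition phi1 :: "real \<Rightarrow> real" where
  "phi1 x = 4 / (3 * pi) * psi1 x"

definition phi2 :: "real \<Rightarrow> real" where
  "phi2 x = 16 / (3 * pi) * psi2 x"

definition mu :: "real \<Rightarrow> real" where
  "mu x = (deriv psi2 x * psi2 x + deriv psi1 x * psi1 x) /
          (deriv psi2 x * psi1 x - deriv psi1 x * psi2 x)"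

definition nuA :: "real \<Rightarrow> real" where
  "nuA x = deriv phi2 x * phi1 x - deriv phi1 x * phi2 x"

definition nuB :: "real \<Rightarrow> real" where
  "nuB x = deriv phi2 x * phi2 x + 16 * deriv phi1 x * phi1 x"

definition nu :: "real \<Rightarrow> real" where
  "nu x = deriv nuA x * nuB x - nuA x * deriv nuB x"

end

(*
  Under c = 1/x^2 and c = 1 - 1/x^2, psi1 and psi2 become elementary multiples of the moments
  sin_moment k r c = int_0^(pi/2) sin^(2k) u (1 - c sin^2 u)^r du, which are hypergeometric in c.
  Differentiating under the integral sign and integrating by parts shows that psi1 and psi2 both
  solve x^2 (x^2 - 1) y'' + x (x^2 - 3) y' + 3 y = 0.

  For two solutions of one linear second order equation, the Wronskian W = psi1 psi2' - psi1' psi2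
  and B = psi1 psi1' + psi2 psi2' satisfy x^2 (x^2 - 1) (W' B - W B') = W E, where
  E = 3 (psi1^2 + psi2^2) - x^2 (x^2 - 1) (psi1'^2 + psi2'^2). Now nu is a positive multiple of
  W' B - W B', and mu = B / W has derivative -(W' B - W B') / W^2, so it suffices to show W > 0
  and E > 0. Both follow from pointwise polynomial bounds on the integrands, integrated by the
  Wallis formulas; for x^2 <= 3 this reduces E > 0 to the positivity of an explicit polynomial in
  1 - 1/x^2 on (0, 2/3], certified by its Bernstein expansion.
*)

theory Submission
  imports Defs
begin

section \<open>Moments of powers of \<open>1 - c sin\<^sup>2 u\<close>\<close>

definition sin_moment :: "nat \<Rightarrow> real \<Rightarrow> real \<Rightarrow> real" where
  "sin_moment k r c = integral {0..pi/2} (\<lambda>u. sin u ^ (2 * k) * (1 - c * sin u ^ 2) powr r)"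

lemma mult_sin_square_less_one:
  fixes c :: real
  assumes "c < 1"
  shows "c * sin u ^ 2 < 1"
proof (cases "c \<le> 0")
  case True
  then have "c * sin u ^ 2 \<le> 0" by (simp add: mult_nonpos_nonneg)
  then show ?thesis by linarith
next
  case False
  have "c * sin u ^ 2 \<le> c * 1"
    using False by (intro mult_left_mono) (auto simp: abs_square_le_1)
  then show ?thesis using assms by linarith
qed

lemma sin_moment_has_integral:
  assumes "c < 1"
  shows "((\<lambda>u. sin u ^ (2 * k) * (1 - c * sin u ^ 2) powr r) has_integral sin_moment k r c) {0..pi/2}"
proof -
  have "continuous_on {0..pi/2} (\<lambda>u. sin u ^ (2 * k) * (1 - c * sin u ^ 2) powr r)"
    using assms by (intro continuous_intros) (auto simp: less_imp_neq[OF mult_sin_square_less_one])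
  then show ?thesis
    unfolding sin_moment_def by (intro integrable_integral integrable_continuous_interval)
qed

lemma has_real_derivative_sin_moment:
  assumes "c < 1"
  shows "(sin_moment k r has_real_derivative - r * sin_moment (k + 1) (r - 1) c) (at c)"
proof -
  let ?f = "\<lambda>c u. sin u ^ (2 * k) * (1 - c * sin u ^ 2) powr r"
  let ?f' = "\<lambda>c u. - r * (sin u ^ (2 * (k + 1)) * (1 - c * sin u ^ 2) powr (r - 1))"
  have "((\<lambda>c. integral (cbox 0 (pi/2)) (?f c)) has_real_derivative integral (cbox 0 (pi/2)) (?f' c))
          (at c within {..<1})"
  proof (rule leibniz_rule_field_derivative)
    fix c u :: real
    assume "c \<in> {..<1}"
    then have "c * sin u ^ 2 < 1" by (simp add: mult_sin_square_less_one)
    then show "((\<lambda>c. ?f c u) has_real_derivative ?f' c u) (at c within {..<1})"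
      by (auto intro!: derivative_eq_intros simp: power_add power2_eq_square algebra_simps)
  next
    fix c :: real
    assume "c \<in> {..<1}"
    then show "?f c integrable_on cbox 0 (pi/2)"
      using sin_moment_has_integral by (auto simp: cbox_interval)
  next
    show "continuous_on ({..<1} \<times> cbox 0 (pi/2)) (\<lambda>(c, u). ?f' c u)"
      unfolding case_prod_unfold
      by (intro continuous_intros) (auto simp: less_imp_neq[OF mult_sin_square_less_one])
  qed (use assms in auto)
  moreover have "at c within {..<1} = at c"
    using assms by (intro at_within_open) auto
  ultimately show ?thesis
    unfolding sin_moment_def[abs_def] cbox_interval by simp
qed

lemma has_real_derivative_sin_moment_chain [derivative_intros]:
  assumes "(g has_real_derivative g') (at x within S)" "g x < 1"
  shows "((\<lambda>x. sin_moment k r (g x)) has_real_derivative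
           - r * sin_moment (k + 1) (r - 1) (g x) * g') (at x within S)"
  using DERIV_chain2[OF has_real_derivative_sin_moment assms(1)] assms(2) by simp

lemma sin_moment_ode_antiderivative:
  fixes c r :: real
  assumes "c < 1"
  shows "((\<lambda>u. sin u ^ (2 * k + 1) * cos u * (1 - c * sin u ^ 2) powr (r - 1)) has_real_derivative
      (2 * real k + 1) * (sin u ^ (2 * k) * (1 - c * sin u ^ 2) powr r)
      - (2 * real k + 2 - (2 * real k + 3 - 2 * r) * c)
          * (sin u ^ (2 * (k + 1)) * (1 - c * sin u ^ 2) powr (r - 1))
      + 2 * (r - 1) * c * (1 - c) * (sin u ^ (2 * (k + 2)) * (1 - c * sin u ^ 2) powr (r - 2))) (at u)"
proof -
  define s where "s = sin u"
  define A where "A = s ^ (2 * k)"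
  define Q where "Q = 1 - c * s\<^sup>2"
  define P where "P = Q powr (r - 2)"
  have "0 < Q" using mult_sin_square_less_one[OF assms] by (simp add: Q_def s_def)
  moreover have "Q powr (r - 1) = Q powr 1 * P" "Q powr r = Q powr 2 * P"
    unfolding P_def by (subst powr_add[symmetric], simp)+
  ultimately have powrs: "Q powr (r - 1) = Q * P" "Q powr r = Q\<^sup>2 * P"
    by (simp_all add: powr_numeral del: powr_one_gt_zero_iff)
  have cos: "cos u ^ 2 = 1 - s\<^sup>2" by (simp add: s_def cos_squared_eq)
  have dQ: "((\<lambda>u. 1 - c * sin u ^ 2) has_real_derivative - (2 * c * s * cos u)) (at u)"
    by (auto intro!: derivative_eq_intros simp: s_def)
  show ?thesis
    apply (rule DERIV_cong[OF DERIV_mult[OF DERIV_mult[OF DERIV_power[OF DERIV_sin] DERIV_cos]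
        DERIV_fun_powr[OF dQ]]])
    subgoal using \<open>0 < Q\<close> by (simp add: Q_def s_def)
    apply (simp flip: s_def)
    apply (simp only: flip: A_def Q_def P_def)
    apply (simp only: powrs)
    using cos unfolding Q_def by algebra
qed

text \<open>Since \<open>sin_moment (k + 1) (r - 1)\<close> and \<open>sin_moment (k + 2) (r - 2)\<close> are multiples of
  the first and second derivatives of \<open>sin_moment k r\<close>, this is the hypergeometric equation
  satisfied by \<open>sin_moment k r\<close>, a multiple of \<open>\<^sub>2F\<^sub>1(-r, k + 1/2; k + 1; c)\<close>.\<close>

lemma sin_moment_ode:
  assumes "c < 1"
  shows "(2 * real k + 1) * sin_moment k r c
    - (2 * real k + 2 - (2 * real k + 3 - 2 * r) * c) * sin_moment (k + 1) (r - 1) c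
    + 2 * (r - 1) * c * (1 - c) * sin_moment (k + 2) (r - 2) c = 0"
proof -
  let ?F = "\<lambda>u. sin u ^ (2 * k + 1) * cos u * (1 - c * sin u ^ 2) powr (r - 1)"
  let ?f = "\<lambda>u. (2 * real k + 1) * (sin u ^ (2 * k) * (1 - c * sin u ^ 2) powr r)
      - (2 * real k + 2 - (2 * real k + 3 - 2 * r) * c)
          * (sin u ^ (2 * (k + 1)) * (1 - c * sin u ^ 2) powr (r - 1))
      + 2 * (r - 1) * c * (1 - c) * (sin u ^ (2 * (k + 2)) * (1 - c * sin u ^ 2) powr (r - 2))"
  have "(?f has_integral ?F (pi/2) - ?F 0) {0..pi/2}"
  proof (rule fundamental_theorem_of_calculus)
    fix u
    show "(?F has_vector_derivative ?f u) (at u within {0..pi/2})"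
      using sin_moment_ode_antiderivative[OF assms, of k r u]
      unfolding has_real_derivative_iff_has_vector_derivative[symmetric]
      by (rule has_field_derivative_at_within)
  qed simp
  then have "(?f has_integral 0) {0..pi/2}" by simp
  moreover have "(?f has_integral (2 * real k + 1) * sin_moment k r c
      - (2 * real k + 2 - (2 * real k + 3 - 2 * r) * c) * sin_moment (k + 1) (r - 1) c
      + 2 * (r - 1) * c * (1 - c) * sin_moment (k + 2) (r - 2) c) {0..pi/2}"
    by (intro has_integral_add has_integral_diff has_integral_mult_right sin_moment_has_integral assms)
  ultimately show ?thesis
    by (intro has_integral_unique[of ?f _ "{0..pi/2}"])
qed

section \<open>Wallis integrals and polynomial bounds\<close>

definition wallis :: "nat \<Rightarrow> real" where
  "wallis k = integral {0..pi/2} (\<lambda>u. sin u ^ (2 * k))"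

lemma sin_moment_at_zero: "sin_moment k r 0 = wallis k"
  by (simp add: sin_moment_def wallis_def)

lemma wallis_0: "wallis 0 = pi / 2"
  by (simp add: wallis_def)

lemma wallis_Suc: "wallis (Suc k) = (2 * real k + 1) / (2 * real k + 2) * wallis k"
  using sin_moment_ode[of 0 k 0] by (simp add: sin_moment_at_zero field_simps)

lemma sin_moment_nonneg:
  assumes "c < 1"
  shows "0 \<le> sin_moment k r c"
  using has_integral_nonneg[OF sin_moment_has_integral[OF assms]]
  by (simp add: zero_le_even_power)

lemma sin_power_poly_has_integral:
  "((\<lambda>u. sin u ^ (2 * k) * poly p (c * sin u ^ 2)) has_integral
      (\<Sum>i\<le>degree p. coeff p i * c ^ i * wallis (k + i))) {0..pi/2}"
proof -
  have "((\<lambda>u. \<Sum>i\<le>degree p. coeff p i * c ^ i * sin u ^ (2 * (k + i))) has_integral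
      (\<Sum>i\<le>degree p. coeff p i * c ^ i * wallis (k + i))) {0..pi/2}"
    unfolding wallis_def
    by (intro has_integral_sum has_integral_mult_right integrable_integral integrable_continuous_interval
        continuous_intros) auto
  moreover have "sin u ^ (2 * k) * poly p (c * sin u ^ 2)
      = (\<Sum>i\<le>degree p. coeff p i * c ^ i * sin u ^ (2 * (k + i)))" for u
    by (simp add: poly_altdef sum_distrib_left power_mult_distrib power_add mult_ac flip: power_mult)
  ultimately show ?thesis by simp
qed

lemma sin_moment_le_poly:
  assumes "0 \<le> c" "c < 1"
    and bound: "\<And>w. 0 \<le> w \<Longrightarrow> w \<le> c \<Longrightarrow> (1 - w) powr r \<le> poly p w"
  shows "sin_moment k r c \<le> (\<Sum>i\<le>degree p. coeff p i * c ^ i * wallis (k + i))"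
proof (rule has_integral_le[OF sin_moment_has_integral[OF assms(2)] sin_power_poly_has_integral])
  fix u
  have "0 \<le> c * sin u ^ 2" "c * sin u ^ 2 \<le> c"
    using assms(1) by (auto intro: mult_left_le simp: abs_square_le_1)
  then show "sin u ^ (2 * k) * (1 - c * sin u ^ 2) powr r \<le> sin u ^ (2 * k) * poly p (c * sin u ^ 2)"
    by (intro mult_left_mono bound) (auto simp: zero_le_even_power)
qed

lemma poly_le_sin_moment:
  assumes "0 \<le> c" "c < 1"
    and bound: "\<And>w. 0 \<le> w \<Longrightarrow> w \<le> c \<Longrightarrow> poly p w \<le> (1 - w) powr r"
  shows "(\<Sum>i\<le>degree p. coeff p i * c ^ i * wallis (k + i)) \<le> sin_moment k r c"
proof (rule has_integral_le[OF sin_power_poly_has_integral sin_moment_has_integral[OF assms(2)]])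
  fix u
  have "0 \<le> c * sin u ^ 2" "c * sin u ^ 2 \<le> c"
    using assms(1) by (auto intro: mult_left_le simp: abs_square_le_1)
  then show "sin u ^ (2 * k) * poly p (c * sin u ^ 2) \<le> sin u ^ (2 * k) * (1 - c * sin u ^ 2) powr r"
    by (intro mult_left_mono bound) (auto simp: zero_le_even_power)
qed

lemma powr_half_integer_sqrt:
  fixes y :: real
  assumes "0 < y"
  shows "y powr (3/2) = sqrt (y ^ 3)" "y powr (- 1/2) = 1 / sqrt y" "y powr (- 3/2) = 1 / sqrt (y ^ 3)"
  using assms powr_half_sqrt_powr[of y 3] powr_minus_divide[of y "1/2"] powr_minus_divide[of y "3/2"]
  by (simp_all add: powr_numeral powr_half_sqrt)

lemma inverse_sqrt_le:
  fixes y q :: real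
  assumes "0 < y" "0 \<le> q" "1 \<le> q\<^sup>2 * y"
  shows "1 / sqrt y \<le> q"
proof -
  have "1 \<le> sqrt (q\<^sup>2 * y)" using assms(3) by simp
  also have "\<dots> = q * sqrt y" using assms(2) by (simp add: real_sqrt_mult)
  finally show ?thesis using assms(1) by (simp add: divide_le_eq mult.commute)
qed

lemma one_minus_powr_three_halves_ge:
  fixes w :: real
  assumes "0 \<le> w" "w < 1"
  shows "1 - 3/2 * w + 1/2 * w ^ 3 \<le> (1 - w) powr (3/2)"
proof -
  have "4 * (1 - w) ^ 3 - (2 - 3 * w + w ^ 3)\<^sup>2 = (1 - w) ^ 3 * w\<^sup>2 * (3 + w)"
    by algebra
  also have "\<dots> \<ge> 0" using assms by simp
  finally have "((2 - 3 * w + w ^ 3) / 2)\<^sup>2 \<le> (1 - w) ^ 3"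
    by (simp add: power_divide)
  then have "(2 - 3 * w + w ^ 3) / 2 \<le> sqrt ((1 - w) ^ 3)"
    by (rule real_le_rsqrt)
  moreover have "0 < 1 - w" using assms by simp
  ultimately show ?thesis
    unfolding powr_half_integer_sqrt(1)[OF \<open>0 < 1 - w\<close>] by (simp add: field_simps)
qed

lemma one_minus_powr_minus_half_le:
  fixes w :: real
  assumes "0 \<le> w" "w \<le> 2/3"
  shows "(1 - w) powr (- 1/2) \<le> 1 + w/2 + w\<^sup>2"
proof -
  have "w ^ 3 \<le> (2/3) ^ 3" using assms by (intro power_mono) auto
  then have "0 \<le> 5 - 5 * w - 4 * w ^ 3" using assms by (simp add: power_divide)
  then have "0 \<le> w\<^sup>2 * (5 - 5 * w - 4 * w ^ 3)" by simp
  also have "\<dots> = (2 + w + 2 * w\<^sup>2)\<^sup>2 * (1 - w) - 4" by algebra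
  finally have "1 \<le> (1 + w/2 + w\<^sup>2)\<^sup>2 * (1 - w)"
    by (simp add: power2_eq_square field_simps)
  then have "1 / sqrt (1 - w) \<le> 1 + w/2 + w\<^sup>2"
    using assms by (intro inverse_sqrt_le) auto
  moreover have "0 < 1 - w" using assms by simp
  ultimately show ?thesis
    unfolding powr_half_integer_sqrt(2)[OF \<open>0 < 1 - w\<close>] by blast
qed

lemma one_minus_powr_minus_three_halves_le:
  fixes w :: real
  assumes "0 \<le> w" "w \<le> 2/3"
  shows "(1 - w) powr (- 3/2) \<le> 1 + 3/2 * w + 8 * w\<^sup>2"
proof -
  define v where "v = 2 - 3 * w"
  have "0 \<le> v" using assms by (simp add: v_def)
  \<comment> \<open>Bernstein-type expansion on \<open>[0, 2/3]\<close>: all coefficients are positive.\<close>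
  have "0 \<le> w\<^sup>2 * (35721 * v ^ 5 + 403137 * w * v ^ 4 + 2133054 * w\<^sup>2 * v ^ 3
      + 3847662 * w ^ 3 * v\<^sup>2 + 2403513 * w ^ 4 * v + 228177 * w ^ 5)"
    using assms \<open>0 \<le> v\<close> by (intro add_nonneg_nonneg mult_nonneg_nonneg zero_le_power) simp_all
  also have "\<dots> = 23328 * ((2 + 3 * w + 16 * w\<^sup>2)\<^sup>2 * (1 - w) ^ 3 - 4)"
    unfolding v_def by algebra
  finally have "1 \<le> (1 + 3/2 * w + 8 * w\<^sup>2)\<^sup>2 * (1 - w) ^ 3"
    by (simp add: power2_eq_square field_simps)
  then have "1 / sqrt ((1 - w) ^ 3) \<le> 1 + 3/2 * w + 8 * w\<^sup>2"
    using assms by (intro inverse_sqrt_le) auto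
  moreover have "0 < 1 - w" using assms by simp
  ultimately show ?thesis
    unfolding powr_half_integer_sqrt(3)[OF \<open>0 < 1 - w\<close>] by blast
qed

lemma sin_moment_le_wallis:
  assumes "0 \<le> c" "c < 1" "0 \<le> r"
  shows "sin_moment k r c \<le> wallis k"
  using sin_moment_le_poly[of c r 1 k] assms by (simp add: powr_le1)

lemma wallis_le_sin_moment:
  assumes "0 \<le> c" "c < 1" "r \<le> 0"
  shows "wallis k \<le> sin_moment k r c"
  using poly_le_sin_moment[of c 1 r k] assms powr_mono2'[of r _ 1] by simp

lemma one_minus_mult_sin_moment_le:
  assumes "c < 1"
  shows "(1 - c) * sin_moment (k + 1) (r - 1) c \<le> sin_moment k r c"
proof (rule has_integral_le[OF has_integral_mult_right[OF sin_moment_has_integral[OF assms]]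
      sin_moment_has_integral[OF assms]])
  fix u
  define Q where "Q = 1 - c * sin u ^ 2"
  have "0 < Q" using mult_sin_square_less_one[OF assms] by (simp add: Q_def)
  then have "Q powr r = Q * Q powr (r - 1)"
    using powr_mult_base[of Q "r - 1"] by simp
  have "(1 - c) * sin u ^ 2 \<le> Q"
    using assms by (simp add: Q_def algebra_simps mult_left_le_one_le abs_square_le_1)
  then have "(1 - c) * sin u ^ 2 * (sin u ^ (2 * k) * Q powr (r - 1))
      \<le> Q * (sin u ^ (2 * k) * Q powr (r - 1))"
    by (rule mult_right_mono) (simp add: zero_le_even_power)
  then show "(1 - c) * (sin u ^ (2 * (k + 1)) * (1 - c * sin u ^ 2) powr (r - 1))
      \<le> sin u ^ (2 * k) * (1 - c * sin u ^ 2) powr r"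
    unfolding Q_def[symmetric] \<open>Q powr r = Q * Q powr (r - 1)\<close>
    by (simp add: power_add power2_eq_square mult_ac)
qed

lemma sin_moment_0_three_halves_ge:
  assumes "0 \<le> c" "c < 1"
  shows "pi/2 * (1 - 3/4 * c + 5/32 * c ^ 3) \<le> sin_moment 0 (3/2) c"
proof -
  define p :: "real poly" where "p = [:1, -3/2, 0, 1/2:]"
  have "(\<Sum>i\<le>degree p. coeff p i * c ^ i * wallis (0 + i)) \<le> sin_moment 0 (3/2) c"
  proof (rule poly_le_sin_moment[OF assms])
    fix w :: real
    assume "0 \<le> w" "w \<le> c"
    then show "poly p w \<le> (1 - w) powr (3/2)"
      using one_minus_powr_three_halves_ge[of w] assms by (simp add: p_def algebra_simps power3_eq_cube)
  qed
  then show ?thesis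
    by (simp add: p_def wallis_Suc wallis_0 numeral_eq_Suc algebra_simps)
qed

lemma sin_moment_2_minus_half_le:
  assumes "0 \<le> c" "c \<le> 2/3"
  shows "sin_moment 2 (- 1/2) c \<le> pi/2 * (3/8 + 5/32 * c + 35/128 * c\<^sup>2)"
proof -
  define p :: "real poly" where "p = [:1, 1/2, 1:]"
  have "sin_moment 2 (- 1/2) c \<le> (\<Sum>i\<le>degree p. coeff p i * c ^ i * wallis (2 + i))"
  proof (rule sin_moment_le_poly)
    fix w :: real
    assume "0 \<le> w" "w \<le> c"
    then show "(1 - w) powr (- 1/2) \<le> poly p w"
      using one_minus_powr_minus_half_le[of w] assms by (simp add: p_def algebra_simps power2_eq_square)
  qed (use assms in auto)
  then show ?thesis
    by (simp add: p_def wallis_Suc wallis_0 numeral_eq_Suc algebra_simps)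
qed

lemma sin_moment_3_minus_three_halves_le:
  assumes "0 \<le> c" "c \<le> 2/3"
  shows "sin_moment 3 (- 3/2) c \<le> pi/2 * (5/16 + 105/256 * c + 63/32 * c\<^sup>2)"
proof -
  define p :: "real poly" where "p = [:1, 3/2, 8:]"
  have "sin_moment 3 (- 3/2) c \<le> (\<Sum>i\<le>degree p. coeff p i * c ^ i * wallis (3 + i))"
  proof (rule sin_moment_le_poly)
    fix w :: real
    assume "0 \<le> w" "w \<le> c"
    then show "(1 - w) powr (- 3/2) \<le> poly p w"
      using one_minus_powr_minus_three_halves_le[of w] assms by (simp add: p_def algebra_simps power2_eq_square)
  qed (use assms in auto)
  then show ?thesis
    by (simp add: p_def wallis_Suc wallis_0 numeral_eq_Suc algebra_simps)
qed

section \<open>The functions \<open>\<psi>\<^sub>1\<close>, \<open>\<psi>\<^sub>2\<close> and their differential equation\<close>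

definition psi1' :: "real \<Rightarrow> real" where
  "psi1' x = 9 / (2 * x ^ 3) * sin_moment 1 (1/2) (1 / x\<^sup>2)"

definition psi1'' :: "real \<Rightarrow> real" where
  "psi1'' x =
     9/2 * (sin_moment 2 (- 1/2) (1 / x\<^sup>2) / x ^ 6 - 3 * sin_moment 1 (1/2) (1 / x\<^sup>2) / x ^ 4)"

definition psi2' :: "real \<Rightarrow> real" where
  "psi2' x = (let m = 1 - 1 / x\<^sup>2 in
     3 / (2 * x ^ 3) * (4 * m * sin_moment 2 (- 1/2) m + m\<^sup>2 * sin_moment 3 (- 3/2) m))"

definition psi2'' :: "real \<Rightarrow> real" where
  "psi2'' x = (let m = 1 - 1 / x\<^sup>2 in
     3/2 * ((8 * sin_moment 2 (- 1/2) m + 8 * m * sin_moment 3 (- 3/2) m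
             + 3 * m\<^sup>2 * sin_moment 4 (- 5/2) m) / x ^ 6
       - 3 * (4 * m * sin_moment 2 (- 1/2) m + m\<^sup>2 * sin_moment 3 (- 3/2) m) / x ^ 4))"

lemma psi1_eq_sin_moment: "psi1 x = 3/2 * sin_moment 0 (3/2) (1 / x\<^sup>2)"
  by (simp add: psi1_def sin_moment_def)

lemma psi2_eq_sin_moment:
  assumes "x \<noteq> 0"
  shows "psi2 x = 3/2 * (1 - 1 / x\<^sup>2)\<^sup>2 * sin_moment 2 (- 1/2) (1 - 1 / x\<^sup>2)"
proof -
  have "sin u ^ 4 / sqrt (1 - (1 - 1 / x\<^sup>2) * sin u ^ 2)
      = sin u ^ (2 * 2) * (1 - (1 - 1 / x\<^sup>2) * sin u ^ 2) powr (- 1/2)" for u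
  proof -
    have pos: "0 < 1 - (1 - 1 / x\<^sup>2) * sin u ^ 2"
      using mult_sin_square_less_one[of "1 - 1 / x\<^sup>2" u] assms by simp
    show ?thesis unfolding powr_half_integer_sqrt(2)[OF pos] by simp
  qed
  then show ?thesis by (simp add: psi2_def sin_moment_def)
qed

lemma has_real_derivative_psi1:
  assumes "1 < x"
  shows "(psi1 has_real_derivative psi1' x) (at x)"
  unfolding psi1_eq_sin_moment[abs_def] psi1'_def
  using assms one_less_power[of x 2] by (auto intro!: derivative_eq_intros simp: field_simps eval_nat_numeral)

lemma has_real_derivative_psi1':
  assumes "1 < x"
  shows "(psi1' has_real_derivative psi1'' x) (at x)"
  unfolding psi1'_def[abs_def] psi1''_def
  using assms one_less_power[of x 2] by (auto intro!: derivative_eq_intros simp: field_simps eval_nat_numeral)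

lemma has_real_derivative_psi2:
  assumes "1 < x"
  shows "(psi2 has_real_derivative psi2' x) (at x)"
proof (rule has_field_derivative_transform_within_open[where S = "{0<..}"])
  show "((\<lambda>x. 3/2 * (1 - 1 / x\<^sup>2)\<^sup>2 * sin_moment 2 (- 1/2) (1 - 1 / x\<^sup>2))
      has_real_derivative psi2' x) (at x)"
    unfolding psi2'_def Let_def
    using assms by (auto intro!: derivative_eq_intros simp: field_simps eval_nat_numeral)
qed (use assms psi2_eq_sin_moment in simp_all)

lemma has_real_derivative_psi2':
  assumes "1 < x"
  shows "(psi2' has_real_derivative psi2'' x) (at x)"
  unfolding psi2'_def[abs_def] psi2''_def Let_def
  using assms by (auto intro!: derivative_eq_intros simp: field_simps eval_nat_numeral)

lemma psi1_ode:
  assumes "1 < x"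
  shows "x\<^sup>2 * (x\<^sup>2 - 1) * psi1'' x + x * (x\<^sup>2 - 3) * psi1' x + 3 * psi1 x = 0"
proof -
  define a where "a = 1 / x\<^sup>2"
  have "a < 1" using assms one_less_power[of x 2] by (simp add: a_def)
  have "x\<^sup>2 * (x\<^sup>2 - 1) * psi1'' x + x * (x\<^sup>2 - 3) * psi1' x + 3 * psi1 x
      = 9/2 * (sin_moment 0 (3/2) a - 2 * sin_moment 1 (1/2) a + a * (1 - a) * sin_moment 2 (- 1/2) a)"
    using assms unfolding psi1_eq_sin_moment psi1'_def psi1''_def a_def
    by (simp add: field_simps eval_nat_numeral)
  also have "\<dots> = 0"
    using sin_moment_ode[OF \<open>a < 1\<close>, of 0 "3/2"] by (simp add: numeral_2_eq_2)
  finally show ?thesis .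
qed

lemma psi2_ode:
  assumes "1 < x"
  shows "x\<^sup>2 * (x\<^sup>2 - 1) * psi2'' x + x * (x\<^sup>2 - 3) * psi2' x + 3 * psi2 x = 0"
proof -
  define m where "m = 1 - 1 / x\<^sup>2"
  define G H L where "G = sin_moment 2 (- 1/2) m" and "H = sin_moment 3 (- 3/2) m"
    and "L = sin_moment 4 (- 5/2) m"
  have "m < 1" using assms by (simp add: m_def)
  have psi2: "psi2 x = 3/2 * m\<^sup>2 * G"
    using assms by (simp add: psi2_eq_sin_moment m_def G_def)
  have "x\<^sup>2 * (x\<^sup>2 - 1) * psi2'' x + x * (x\<^sup>2 - 3) * psi2' x + 3 * psi2 x
      = x\<^sup>2 * (x\<^sup>2 - 1)
          * (3/2 * ((8 * G + 8 * m * H + 3 * m\<^sup>2 * L) / x ^ 6 - 3 * (4 * m * G + m\<^sup>2 * H) / x ^ 4))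
        + x * (x\<^sup>2 - 3) * (3 / (2 * x ^ 3) * (4 * m * G + m\<^sup>2 * H)) + 3 * (3/2 * m\<^sup>2 * G)"
    unfolding psi2 psi2'_def psi2''_def Let_def m_def[symmetric] G_def[symmetric] H_def[symmetric]
      L_def[symmetric] by simp
  also have "\<dots> = - 3/2 * m\<^sup>2 * (5 * G - (6 - 8 * m) * H - 3 * m * (1 - m) * L)"
    using assms unfolding m_def by (simp add: field_simps) algebra
  also have "\<dots> = 0"
    using sin_moment_ode[OF \<open>m < 1\<close>, of 2 "- 1/2"] by (simp add: G_def H_def L_def)
  finally show ?thesis .
qed

section \<open>The Wronskian and the signs of \<open>\<nu>\<close> and \<open>\<mu>'\<close>\<close>

definition psi_wronskian :: "real \<Rightarrow> real" where
  "psi_wronskian x = psi1 x * psi2' x - psi1' x * psi2 x"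

definition psi_inner :: "real \<Rightarrow> real" where
  "psi_inner x = psi1 x * psi1' x + psi2 x * psi2' x"

definition psi_wronskian' :: "real \<Rightarrow> real" where
  "psi_wronskian' x = psi1 x * psi2'' x - psi1'' x * psi2 x"

definition psi_inner' :: "real \<Rightarrow> real" where
  "psi_inner' x = psi1' x ^ 2 + psi1 x * psi1'' x + psi2' x ^ 2 + psi2 x * psi2'' x"

lemma wallis_pos: "0 < wallis k"
  by (induction k) (simp_all add: wallis_0 wallis_Suc)

lemma psi_wronskian_pos:
  assumes "1 < x"
  shows "0 < psi_wronskian x"
proof -
  define a m where "a = 1 / x\<^sup>2" and "m = 1 - a"
  define I J G H where "I = sin_moment 0 (3/2) a" and "J = sin_moment 1 (1/2) a"
    and "G = sin_moment 2 (- 1/2) m" and "H = sin_moment 3 (- 3/2) m"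
  have x0: "x \<noteq> 0" and x2: "1 < x\<^sup>2" using assms by (simp_all add: one_less_power)
  then have a: "0 < a" "a < 1" and m: "0 < m" "m < 1" by (auto simp: a_def m_def divide_less_eq)
  have "m * J \<le> I"
    using one_minus_mult_sin_moment_le[OF \<open>a < 1\<close>, of 0 "3/2"] by (simp add: I_def J_def m_def a_def)
  moreover have "0 < I"
  proof -
    have "0 < pi/2 * (1 - 3/4 * a + 5/32 * a ^ 3)" using a by (simp add: add_pos_nonneg)
    with sin_moment_0_three_halves_ge[of a] a show ?thesis by (simp add: I_def)
  qed
  moreover have "0 < G" "0 < H"
    using wallis_le_sin_moment[of m "- 1/2" 2] wallis_le_sin_moment[of m "- 3/2" 3] wallis_pos[of 2]
      wallis_pos[of 3] m
    by (simp_all add: G_def H_def)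
  ultimately have "0 < m * G * (4 * I - 3 * m * J) + m\<^sup>2 * H * I"
    using m by (intro add_nonneg_pos mult_nonneg_nonneg) auto
  moreover have "psi_wronskian x = 9 / (4 * x ^ 3) * (m * G * (4 * I - 3 * m * J) + m\<^sup>2 * H * I)"
    using assms unfolding psi_wronskian_def psi1_eq_sin_moment psi2_eq_sin_moment[OF x0] psi1'_def
      psi2'_def Let_def m_def[symmetric] a_def[symmetric] I_def[symmetric] J_def[symmetric]
      G_def[symmetric] H_def[symmetric]
    by (simp add: field_simps power2_eq_square)
  ultimately show ?thesis using assms by simp
qed

lemma energy_form_mono:
  fixes m I I0 J J1 G G0 G1 H H1 :: real
  assumes "0 \<le> m" "m \<le> 1" "0 \<le> I0" "I0 \<le> I" "0 \<le> J" "J \<le> J1"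
    "0 \<le> G0" "G0 \<le> G" "G \<le> G1" "0 \<le> H" "H \<le> H1"
  shows "3 * (I0\<^sup>2 + m ^ 4 * G0\<^sup>2) - m * (1 - m) * (9 * J1\<^sup>2 + (4 * m * G1 + m\<^sup>2 * H1)\<^sup>2)
    \<le> 3 * (I\<^sup>2 + m ^ 4 * G\<^sup>2) - m * (1 - m) * (9 * J\<^sup>2 + (4 * m * G + m\<^sup>2 * H)\<^sup>2)"
proof -
  have "I0\<^sup>2 \<le> I\<^sup>2" "m ^ 4 * G0\<^sup>2 \<le> m ^ 4 * G\<^sup>2"
    using assms by (auto intro!: power_mono mult_left_mono)
  then have "3 * (I0\<^sup>2 + m ^ 4 * G0\<^sup>2) \<le> 3 * (I\<^sup>2 + m ^ 4 * G\<^sup>2)" by simp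
  moreover have "(4 * m * G + m\<^sup>2 * H)\<^sup>2 \<le> (4 * m * G1 + m\<^sup>2 * H1)\<^sup>2"
    using assms by (intro power_mono add_mono mult_left_mono add_nonneg_nonneg mult_nonneg_nonneg) auto
  then have "m * (1 - m) * (9 * J\<^sup>2 + (4 * m * G + m\<^sup>2 * H)\<^sup>2)
      \<le> m * (1 - m) * (9 * J1\<^sup>2 + (4 * m * G1 + m\<^sup>2 * H1)\<^sup>2)"
    using assms by (intro mult_left_mono add_mono power_mono) auto
  ultimately show ?thesis by (rule diff_mono)
qed

lemma energy_polynomial_pos:
  fixes m :: real
  assumes "0 < m" "m \<le> 2/3"
  shows "0 < 3 * ((1 - 3/4 * (1 - m) + 5/32 * (1 - m) ^ 3)\<^sup>2 + m ^ 4 * (3/8)\<^sup>2)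
    - m * (1 - m) * (9 * (1/2)\<^sup>2 + (4 * m * (3/8 + 5/32 * m + 35/128 * m\<^sup>2)
      + m\<^sup>2 * (5/16 + 105/256 * m + 63/32 * m\<^sup>2))\<^sup>2)"
proof -
  define v where "v = 2/3 - m"
  have "0 \<le> v" using assms by (simp add: v_def)
  \<comment> \<open>Bernstein expansion on \<open>[0, 2/3]\<close>: all coefficients are positive.\<close>
  have "0 < 29937843/1048576 * v ^ 10 + 118157049/524288 * m * v ^ 9
      + 877172895/1048576 * m ^ 2 * v ^ 8 + 258706791/131072 * m ^ 3 * v ^ 7
      + 1746610371/524288 * m ^ 4 * v ^ 6 + 1090749483/262144 * m ^ 5 * v ^ 5
      + 1961894763/524288 * m ^ 6 * v ^ 4 + 1182672225/524288 * m ^ 7 * v ^ 3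
      + 847043145/1048576 * m ^ 8 * v ^ 2 + 17889723/131072 * m ^ 9 * v
      + 10328697/1048576 * m ^ 10"
    using assms \<open>0 \<le> v\<close> by (intro add_nonneg_pos add_nonneg_nonneg mult_nonneg_nonneg) simp_all
  also have "\<dots> = 3 * ((1 - 3/4 * (1 - m) + 5/32 * (1 - m) ^ 3)\<^sup>2 + m ^ 4 * (3/8)\<^sup>2)
    - m * (1 - m) * (9 * (1/2)\<^sup>2 + (4 * m * (3/8 + 5/32 * m + 35/128 * m\<^sup>2)
      + m\<^sup>2 * (5/16 + 105/256 * m + 63/32 * m\<^sup>2))\<^sup>2)"
    unfolding v_def by algebra
  finally show ?thesis .
qed

lemma psi_energy_pos:
  assumes "1 < x" "x\<^sup>2 \<le> 3"
  shows "0 < 3 * (psi1 x ^ 2 + psi2 x ^ 2) - x\<^sup>2 * (x\<^sup>2 - 1) * (psi1' x ^ 2 + psi2' x ^ 2)"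
proof -
  define a m where "a = 1 / x\<^sup>2" and "m = 1 - a"
  define I J G H where "I = sin_moment 0 (3/2) a" and "J = sin_moment 1 (1/2) a"
    and "G = sin_moment 2 (- 1/2) m" and "H = sin_moment 3 (- 3/2) m"
  have x0: "x \<noteq> 0" and x2: "1 < x\<^sup>2" using assms by (simp_all add: one_less_power)
  then have a: "0 < a" "a < 1" and m: "0 < m" "m \<le> 2/3"
    using assms(2) by (auto simp: a_def m_def divide_less_eq le_divide_eq)
  define A Gu Hu where "A = 1 - 3/4 * (1 - m) + 5/32 * (1 - m) ^ 3"
    and "Gu = 3/8 + 5/32 * m + 35/128 * m\<^sup>2" and "Hu = 5/16 + 105/256 * m + 63/32 * m\<^sup>2"
  have "0 \<le> A" using m unfolding A_def by (intro add_nonneg_nonneg) auto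
  have "0 < (pi/2)\<^sup>2 * (3 * (A\<^sup>2 + m ^ 4 * (3/8)\<^sup>2)
      - m * (1 - m) * (9 * (1/2)\<^sup>2 + (4 * m * Gu + m\<^sup>2 * Hu)\<^sup>2))"
    using energy_polynomial_pos[OF m] by (simp add: A_def Gu_def Hu_def)
  also have "\<dots> = 3 * ((pi/2 * A)\<^sup>2 + m ^ 4 * (pi/2 * (3/8))\<^sup>2)
      - m * (1 - m) * (9 * (pi/2 * (1/2))\<^sup>2 + (4 * m * (pi/2 * Gu) + m\<^sup>2 * (pi/2 * Hu))\<^sup>2)"
    by (simp add: power2_eq_square field_simps)
  also have "\<dots> \<le> 3 * (I\<^sup>2 + m ^ 4 * G\<^sup>2)
      - m * (1 - m) * (9 * J\<^sup>2 + (4 * m * G + m\<^sup>2 * H)\<^sup>2)"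
  proof (rule energy_form_mono)
    show "pi/2 * A \<le> I"
      using sin_moment_0_three_halves_ge[of a] a by (simp add: I_def A_def m_def)
    show "0 \<le> J" "J \<le> pi/2 * (1/2)"
      using sin_moment_nonneg[of a] sin_moment_le_wallis[of a "1/2" 1] a
      by (simp_all add: J_def wallis_Suc wallis_0)
    show "pi/2 * (3/8) \<le> G" "0 \<le> H"
      using wallis_le_sin_moment[of m "- 1/2" 2] sin_moment_nonneg[of m 3 "- 3/2"] m
      by (simp_all add: G_def H_def wallis_Suc wallis_0 numeral_eq_Suc)
    show "G \<le> pi/2 * Gu" "H \<le> pi/2 * Hu"
      using sin_moment_2_minus_half_le[of m] sin_moment_3_minus_three_halves_le[of m] m
      by (simp_all add: G_def H_def Gu_def Hu_def)
  qed (use m \<open>0 \<le> A\<close> in simp_all)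
  also have "\<dots> = 4/9 * (3 * (psi1 x ^ 2 + psi2 x ^ 2)
      - x\<^sup>2 * (x\<^sup>2 - 1) * (psi1' x ^ 2 + psi2' x ^ 2))"
    unfolding psi1_eq_sin_moment psi2_eq_sin_moment[OF x0] psi1'_def psi2'_def Let_def
      a_def[symmetric] m_def[symmetric] I_def[symmetric] J_def[symmetric] G_def[symmetric]
      H_def[symmetric]
    using x0 unfolding m_def a_def by (simp add: field_simps) algebra
  finally show ?thesis by simp
qed

lemma second_order_ode_wronskian_identity:
  fixes a b c y1 y1' y1'' y2 y2' y2'' :: "'a::idom"
  assumes "a * y1'' + b * y1' + c * y1 = 0" "a * y2'' + b * y2' + c * y2 = 0"
  shows "a * ((y1 * y2'' - y1'' * y2) * (y1 * y1' + y2 * y2')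
      - (y1 * y2' - y1' * y2) * (y1' ^ 2 + y1 * y1'' + y2' ^ 2 + y2 * y2''))
    = (y1 * y2' - y1' * y2) * (c * (y1 ^ 2 + y2 ^ 2) - a * (y1' ^ 2 + y2' ^ 2))"
  using assms by algebra

lemma has_real_derivative_psi_wronskian:
  assumes "1 < x"
  shows "(psi_wronskian has_real_derivative psi_wronskian' x) (at x)"
  unfolding psi_wronskian_def[abs_def] psi_wronskian'_def
  by (rule DERIV_cong[OF DERIV_diff[OF
        DERIV_mult[OF has_real_derivative_psi1 has_real_derivative_psi2']
        DERIV_mult[OF has_real_derivative_psi1' has_real_derivative_psi2]]])
    (use assms in \<open>simp_all add: algebra_simps\<close>)

lemma has_real_derivative_psi_inner:
  assumes "1 < x"
  shows "(psi_inner has_real_derivative psi_inner' x) (at x)"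
  unfolding psi_inner_def[abs_def] psi_inner'_def
  by (rule DERIV_cong[OF DERIV_add[OF
        DERIV_mult[OF has_real_derivative_psi1 has_real_derivative_psi1']
        DERIV_mult[OF has_real_derivative_psi2 has_real_derivative_psi2']]])
    (use assms in \<open>simp_all add: algebra_simps power2_eq_square\<close>)

lemma psi_wronskian_inner_identity:
  assumes "1 < x"
  shows "x\<^sup>2 * (x\<^sup>2 - 1) * (psi_wronskian' x * psi_inner x - psi_wronskian x * psi_inner' x)
    = psi_wronskian x
      * (3 * (psi1 x ^ 2 + psi2 x ^ 2) - x\<^sup>2 * (x\<^sup>2 - 1) * (psi1' x ^ 2 + psi2' x ^ 2))"
  unfolding psi_wronskian_def psi_inner_def psi_wronskian'_def psi_inner'_def
  by (rule second_order_ode_wronskian_identity[OF psi1_ode[OF assms] psi2_ode[OF assms]])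

lemma psi_wronskian_inner_cross_pos:
  assumes "1 < x" "x\<^sup>2 \<le> 3"
  shows "0 < psi_wronskian' x * psi_inner x - psi_wronskian x * psi_inner' x"
proof -
  have "0 < x\<^sup>2 * (x\<^sup>2 - 1)" using assms by (simp add: one_less_power)
  moreover have
    "0 < x\<^sup>2 * (x\<^sup>2 - 1) * (psi_wronskian' x * psi_inner x - psi_wronskian x * psi_inner' x)"
    unfolding psi_wronskian_inner_identity[OF assms(1)]
    using psi_wronskian_pos[OF assms(1)] psi_energy_pos[OF assms] by simp
  ultimately show ?thesis using zero_less_mult_pos by blast
qed

lemma deriv_psi:
  assumes "1 < x"
  shows "deriv psi1 x = psi1' x" "deriv psi2 x = psi2' x"
  using has_real_derivative_psi1[OF assms] has_real_derivative_psi2[OF assms] by (simp_all add: DERIV_imp_deriv)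

lemma deriv_phi:
  assumes "1 < x"
  shows "deriv phi1 x = 4 / (3 * pi) * psi1' x" "deriv phi2 x = 16 / (3 * pi) * psi2' x"
  unfolding phi1_def[abs_def] phi2_def[abs_def]
  by (rule DERIV_imp_deriv DERIV_cmult has_real_derivative_psi1 has_real_derivative_psi2 assms)+

lemma nu_eq:
  assumes "1 < x"
  shows "nu x = 4 / (3 * pi) * (16 / (3 * pi)) ^ 3
    * (psi_wronskian' x * psi_inner x - psi_wronskian x * psi_inner' x)"
proof -
  define c1 c2 where "c1 = 4 / (3 * pi)" and "c2 = 16 / (3 * pi)"
  have "\<forall>\<^sub>F y in nhds x. y \<in> {1<..}"
    using assms by (intro eventually_nhds_in_open) auto
  then have "\<forall>\<^sub>F y in nhds x. nuA y = c1 * c2 * psi_wronskian y \<and> nuB y = c2\<^sup>2 * psi_inner y"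
  proof eventually_elim
    case (elim y)
    then show ?case
      by (simp add: nuA_def nuB_def deriv_phi phi1_def phi2_def psi_wronskian_def psi_inner_def
          c1_def c2_def power2_eq_square field_simps)
  qed
  then have nuA: "\<forall>\<^sub>F y in nhds x. nuA y = c1 * c2 * psi_wronskian y"
    and nuB: "\<forall>\<^sub>F y in nhds x. nuB y = c2\<^sup>2 * psi_inner y"
    by (auto elim: eventually_mono)
  have dA: "deriv nuA x = c1 * c2 * psi_wronskian' x"
    unfolding deriv_cong_ev[OF nuA refl]
    by (intro DERIV_imp_deriv DERIV_cmult has_real_derivative_psi_wronskian assms)
  moreover have dB: "deriv nuB x = c2\<^sup>2 * psi_inner' x"
    unfolding deriv_cong_ev[OF nuB refl]
    by (intro DERIV_imp_deriv DERIV_cmult has_real_derivative_psi_inner assms)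
  moreover have vA: "nuA x = c1 * c2 * psi_wronskian x" and vB: "nuB x = c2\<^sup>2 * psi_inner x"
    using nuA nuB by (auto dest: eventually_nhds_x_imp_x)
  ultimately show ?thesis
    unfolding nu_def dA dB vA vB c1_def[symmetric] c2_def[symmetric] by algebra
qed

lemma nu_pos:
  assumes "1 < x" "x\<^sup>2 \<le> 3"
  shows "0 < nu x"
  unfolding nu_eq[OF assms(1)] using psi_wronskian_inner_cross_pos[OF assms] by simp

lemma mu_eq:
  assumes "1 < x"
  shows "mu x = psi_inner x / psi_wronskian x"
  unfolding mu_def psi_inner_def psi_wronskian_def deriv_psi[OF assms] by (simp add: mult.commute)

lemma mu_has_negative_derivative:
  assumes "1 < x" "x\<^sup>2 \<le> 3"
  shows "\<exists>d. (mu has_real_derivative d) (at x) \<and> d < 0"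
proof -
  let ?d = "(psi_inner' x * psi_wronskian x - psi_inner x * psi_wronskian' x) / (psi_wronskian x)\<^sup>2"
  have W: "0 < psi_wronskian x" using psi_wronskian_pos[OF assms(1)] .
  have "((\<lambda>y. psi_inner y / psi_wronskian y) has_real_derivative ?d) (at x)"
    using DERIV_divide[OF has_real_derivative_psi_inner[OF assms(1)]
        has_real_derivative_psi_wronskian[OF assms(1)]] W by (simp add: power2_eq_square)
  then have "(mu has_real_derivative ?d) (at x)"
    by (rule has_field_derivative_transform_within_open[where S = "{1<..}"]) (use assms mu_eq in auto)
  moreover have "?d < 0"
    using psi_wronskian_inner_cross_pos[OF assms] W by (intro divide_neg_pos) (simp_all add: algebra_simps)
  ultimately show ?thesis by blast
qed

theorem mainTheorem12:
  shows "(\<forall>x::real. 1 < x \<and> x \<le> 1.732 \<longrightarrow> nu x > 0) \<and>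
         (\<forall>x y::real. 1 < x \<and> x < y \<and> y \<le> 1.732 \<longrightarrow> mu y < mu x)"
proof -
  have square_le_3: "x\<^sup>2 \<le> 3" if "1 < x" "x \<le> 1.732" for x :: real
  proof -
    have "x\<^sup>2 \<le> 1.732\<^sup>2" using that by (intro power_mono) auto
    then show ?thesis by (simp add: power2_eq_square)
  qed
  show ?thesis
  proof (intro conjI allI impI)
    fix x :: real
    assume "1 < x \<and> x \<le> 1.732"
    then show "nu x > 0" using nu_pos square_le_3 by blast
  next
    fix x y :: real
    assume xy: "1 < x \<and> x < y \<and> y \<le> 1.732"
    show "mu y < mu x"
    proof (rule DERIV_neg_imp_decreasing[of x y mu])
      fix z
      assume "x \<le> z" "z \<le> y"
      with xy show "\<exists>d. (mu has_real_derivative d) (at z) \<and> d < 0"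
        by (intro mu_has_negative_derivative square_le_3) auto
    qed (use xy in simp)
  qed
qed

end
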